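(* Let $\mathcal{X}=\mathcal{X}_1\times\cdots\times\mathcal{X}_K$ and let $P_1$ and $P_2$ be the transition kernels of the deterministic-scan Gibbs samplers targeting $\pi_1\in\mathcal{P}(\mathcal{X})$ and $\pi_2\in\mathcal{P}(\mathcal{X})$, respectively. Then for every $M\ge1$ and every $\mu\in\mathcal{N}(\pi_1,M)\cup\mathcal{N}(\pi_2,M)$, \[ \|\mu P_1-\mu P_2\|_{TV}\le 2MK\|\pi_1-\pi_2\|_{TV}. \]
   Context: $\mathcal{P}(\mathcal{X})$ is the set of probability distributions on $\mathcal{X}$; $\|\mu-\nu\|_{TV}=\sup_A|\mu(A)-\nu(A)|$. The deterministic-scan Gibbs sampler targeting $\pi$ is $P=P_{\cdot,1}\cdots P_{\cdot,K}$, where the $i$-th factor resamples coordinate $x_i$ from $\pi(\mathrm{d}x_i\mid\mathbf{x}^{(-i)})$, $\mathbf{x}^{(-i)}=(x_j)_{j\ne i}$, leaving other coordinates unchanged. $\mathcal{N}(\pi,M)=\{\mu\in\mathcal{P}(\mathcal{X}):\mu(A)\le M\pi(A)\ \forall A\}$; $\mu P(A)=\int P(\mathbf{x},A)\mu(\mathrm{d}\mathbf{x})$. *)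

theory Defs
  imports "HOL-Probability.Probability"
begin

text \<open>The product space X = X_0 x ... x X_{K-1} is PiM {..<K} Ms; coordinates are indexed
  by 0..K-1. Points are (extensional) functions nat => 'a.\<close>

abbreviation prodX :: "nat \<Rightarrow> (nat \<Rightarrow> 'a measure) \<Rightarrow> (nat \<Rightarrow> 'a) measure" where
  "prodX K Ms \<equiv> PiM {..<K} Ms"

definition tv_dist :: "'b measure \<Rightarrow> 'b measure \<Rightarrow> real" where
  "tv_dist \<mu> \<nu> = (SUP A \<in> sets \<mu>. \<bar>measure \<mu> A - measure \<nu> A\<bar>)"

definition Nset :: "nat \<Rightarrow> (nat \<Rightarrow> 'a measure) \<Rightarrow> (nat \<Rightarrow> 'a) measure \<Rightarrow> real
    \<Rightarrow> (nat \<Rightarrow> 'a) measure set" where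
  "Nset K Ms \<pi> M = {\<mu>. prob_space \<mu> \<and> sets \<mu> = sets (prodX K Ms) \<and>
      (\<forall>A \<in> sets (prodX K Ms). measure \<mu> A \<le> M * measure \<pi> A)}"

text \<open>Q is a (regular) version of the conditional distribution pi(dx_i | x^(-i)):
  Q is a probability kernel from X^(-i) = PiM ({..<K}-{i}) Ms to X_i, and for every
  measurable B in X^(-i) and E in X_i,
  pi{x. x^(-i) in B, x_i in E} = integral over pi of 1_B(x^(-i)) Q(x^(-i), E).\<close>
definition is_cond_dist :: "nat \<Rightarrow> (nat \<Rightarrow> 'a measure) \<Rightarrow> (nat \<Rightarrow> 'a) measure \<Rightarrow> nat
    \<Rightarrow> ((nat \<Rightarrow> 'a) \<Rightarrow> 'a measure) \<Rightarrow> bool" where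
  "is_cond_dist K Ms \<pi> i Q \<longleftrightarrow>
     Q \<in> PiM ({..<K} - {i}) Ms \<rightarrow>\<^sub>M prob_algebra (Ms i) \<and>
     (\<forall>B \<in> sets (PiM ({..<K} - {i}) Ms). \<forall>E \<in> sets (Ms i).
        emeasure \<pi> {x \<in> space \<pi>. restrict x ({..<K} - {i}) \<in> B \<and> x i \<in> E}
        = (\<integral>\<^sup>+ x. indicator B (restrict x ({..<K} - {i}))
                     * emeasure (Q (restrict x ({..<K} - {i}))) E \<partial>\<pi>))"

definition gibbs_step :: "nat \<Rightarrow> (nat \<Rightarrow> 'a measure) \<Rightarrow> nat \<Rightarrow> ((nat \<Rightarrow> 'a) \<Rightarrow> 'a measure)
    \<Rightarrow> (nat \<Rightarrow> 'a) \<Rightarrow> (nat \<Rightarrow> 'a) measure" where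
  "gibbs_step K Ms i Q x =
     distr (Q (restrict x ({..<K} - {i}))) (prodX K Ms) (\<lambda>y. x(i := y))"

fun gibbs_iter :: "nat \<Rightarrow> (nat \<Rightarrow> 'a measure) \<Rightarrow> (nat \<Rightarrow> (nat \<Rightarrow> 'a) \<Rightarrow> 'a measure) \<Rightarrow> nat
    \<Rightarrow> (nat \<Rightarrow> 'a) measure \<Rightarrow> (nat \<Rightarrow> 'a) measure" where
  "gibbs_iter K Ms Q 0 \<nu> = \<nu>"
| "gibbs_iter K Ms Q (Suc n) \<nu> = bind (gibbs_iter K Ms Q n \<nu>) (gibbs_step K Ms n (Q n))"

definition gibbs_kernel :: "nat \<Rightarrow> (nat \<Rightarrow> 'a measure) \<Rightarrow> (nat \<Rightarrow> (nat \<Rightarrow> 'a) \<Rightarrow> 'a measure)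
    \<Rightarrow> (nat \<Rightarrow> 'a) \<Rightarrow> (nat \<Rightarrow> 'a) measure" where
  "gibbs_kernel K Ms Q x = gibbs_iter K Ms Q K (return (prodX K Ms) x)"

definition apply_kernel :: "'b measure \<Rightarrow> ('b \<Rightarrow> 'b measure) \<Rightarrow> 'b measure" where
  "apply_kernel \<mu> P = bind \<mu> P"

end

theory Submission
  imports Defs
begin

(* Let P_k = P_{k,1} ... P_{k,K}. Every factor P_{2,i} leaves pi_2 invariant, so if mu <= M pi_2
   then every partial scan nu = mu P_{2,1} ... P_{2,j} satisfies nu <= M pi_2 as well. Exchanging
   the two scans one factor at a time, and using that Markov kernels do not increase total
   variation, ||mu P_1 - mu P_2|| is bounded by K terms ||nu P_{1,i} - nu P_{2,i}|| with
   nu <= M pi_2. For an event E, the positive part of P_{1,i}(x, E) - P_{2,i}(x, E) is carried by a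
   set {x^(-i) in T}, so domination bounds nu P_{1,i}(E) - nu P_{2,i}(E) by M times a difference of
   pi_2-integrals over {x^(-i) in T}. Replacing pi_2 by pi_1 in the first integral costs one
   ||pi_1 - pi_2||; the defining property of the conditional distributions then turns the two
   integrals into pi_1(S) and pi_2(S) for S = {x^(-i) in T, x in E}, which costs another.
   The case mu <= M pi_1 is symmetric. *)

section \<open>Total variation distance\<close>

lemma abs_measure_diff_le_tv_dist:
  assumes "prob_space \<rho>" "prob_space \<rho>'" "A \<in> sets \<rho>"
  shows "\<bar>measure \<rho> A - measure \<rho>' A\<bar> \<le> tv_dist \<rho> \<rho>'"
  unfolding tv_dist_def
proof (rule cSUP_upper[OF assms(3)])
  have "\<bar>measure \<rho> B - measure \<rho>' B\<bar> \<le> 1" for B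
    using assms prob_space.prob_le_1 measure_nonneg[of \<rho> B] measure_nonneg[of \<rho>' B]
    by (smt (verit))
  then show "bdd_above ((\<lambda>A. \<bar>measure \<rho> A - measure \<rho>' A\<bar>) ` sets \<rho>)"
    by (intro bdd_aboveI[of _ 1]) auto
qed

lemma tv_dist_leI:
  assumes "\<And>A. A \<in> sets \<rho> \<Longrightarrow> \<bar>measure \<rho> A - measure \<rho>' A\<bar> \<le> c"
  shows "tv_dist \<rho> \<rho>' \<le> c"
  unfolding tv_dist_def by (rule cSUP_least) (use assms sets.empty_sets in auto)

lemma tv_dist_self [simp]: "tv_dist \<rho> \<rho> = 0"
  by (simp add: tv_dist_def) (metis cSUP_const empty_iff sets.empty_sets)

lemma tv_dist_commute:
  assumes "sets \<rho> = sets \<rho>'"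
  shows "tv_dist \<rho> \<rho>' = tv_dist \<rho>' \<rho>"
  unfolding tv_dist_def assms by (simp add: abs_minus_commute)

lemma tv_dist_triangle:
  assumes "prob_space \<rho>" "prob_space \<rho>'" "prob_space \<rho>''"
    and "sets \<rho>' = sets \<rho>" "sets \<rho>'' = sets \<rho>"
  shows "tv_dist \<rho> \<rho>'' \<le> tv_dist \<rho> \<rho>' + tv_dist \<rho>' \<rho>''"
proof (rule tv_dist_leI)
  fix A assume "A \<in> sets \<rho>"
  then have "\<bar>measure \<rho> A - measure \<rho>' A\<bar> \<le> tv_dist \<rho> \<rho>'"
    and "\<bar>measure \<rho>' A - measure \<rho>'' A\<bar> \<le> tv_dist \<rho>' \<rho>''"
    using assms by (auto intro!: abs_measure_diff_le_tv_dist)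
  then show "\<bar>measure \<rho> A - measure \<rho>'' A\<bar> \<le> tv_dist \<rho> \<rho>' + tv_dist \<rho>' \<rho>''"
    by linarith
qed

lemma card_le_real_eq_floor:
  assumes "0 \<le> t" "t \<le> real n"
  shows "real (card {j \<in> {1..n}. real j \<le> t}) = of_int \<lfloor>t\<rfloor>"
proof -
  have "{j \<in> {1..n}. real j \<le> t} = {1..nat \<lfloor>t\<rfloor>}"
    using assms by (auto simp: le_nat_iff le_floor_iff)
  then show ?thesis
    using assms by auto
qed

lemma integral_level_set_bounds:
  fixes \<phi> :: "'a \<Rightarrow> real"
  assumes "prob_space \<rho>" and [measurable]: "\<phi> \<in> borel_measurable \<rho>"
    and \<phi>: "\<And>x. x \<in> space \<rho> \<Longrightarrow> 0 \<le> \<phi> x \<and> \<phi> x \<le> 1" and n: "n > 0"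
  defines "L \<equiv> (\<Sum>j=1..n. measure \<rho> {x \<in> space \<rho>. real j / real n \<le> \<phi> x}) / real n"
  shows "L \<le> (\<integral>x. \<phi> x \<partial>\<rho>)" and "(\<integral>x. \<phi> x \<partial>\<rho>) \<le> L + 1 / real n"
proof -
  interpret prob_space \<rho> by fact
  define A where "A j = {x \<in> space \<rho>. real j / real n \<le> \<phi> x}" for j
  have A [measurable]: "A j \<in> sets \<rho>" for j
    unfolding A_def by measurable
  define \<psi> where "\<psi> x = (\<Sum>j=1..n. indicator (A j) x) / real n" for x :: 'a
  have \<psi>_floor: "\<psi> x = of_int \<lfloor>real n * \<phi> x\<rfloor> / real n" if x: "x \<in> space \<rho>" for x
  proof -
    have "(\<Sum>j=1..n. indicator (A j) x) = (\<Sum>j=1..n. if real j \<le> real n * \<phi> x then 1 else 0 :: real)"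
      using x n by (intro sum.cong) (auto simp: A_def indicator_def field_simps)
    also have "\<dots> = real (card {j \<in> {1..n}. real j \<le> real n * \<phi> x})"
      by (subst sum.inter_filter[symmetric]) simp_all
    also have "\<dots> = of_int \<lfloor>real n * \<phi> x\<rfloor>"
      using \<phi>[OF x] by (intro card_le_real_eq_floor) (auto simp: mult_left_le)
    finally show ?thesis
      by (simp add: \<psi>_def)
  qed
  have \<psi>_bounds: "\<psi> x \<le> \<phi> x" "\<phi> x \<le> \<psi> x + 1 / real n" if "x \<in> space \<rho>" for x
    using n floor_correct[of "real n * \<phi> x"] unfolding \<psi>_floor[OF that]
    by (auto simp: field_simps)
  have [measurable]: "\<psi> \<in> borel_measurable \<rho>"
    unfolding \<psi>_def by measurable
  have int_\<psi>: "integrable \<rho> \<psi>"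
    unfolding \<psi>_def by (auto intro!: integrable_real_indicator simp: emeasure_eq_measure)
  have int_\<phi>: "integrable \<rho> \<phi>"
    by (rule integrable_const_bound[where B=1]) (use \<phi> in auto)
  have "(\<integral>x. \<psi> x \<partial>\<rho>) = L"
    by (simp add: \<psi>_def L_def A_def[symmetric] emeasure_eq_measure)
  moreover have "(\<integral>x. \<psi> x \<partial>\<rho>) \<le> (\<integral>x. \<phi> x \<partial>\<rho>)"
    by (intro integral_mono int_\<phi> int_\<psi> \<psi>_bounds)
  moreover have "(\<integral>x. \<phi> x \<partial>\<rho>) \<le> (\<integral>x. \<psi> x + 1 / real n \<partial>\<rho>)"
    by (intro integral_mono int_\<phi> \<psi>_bounds) (use int_\<psi> in auto)
  ultimately show "L \<le> (\<integral>x. \<phi> x \<partial>\<rho>)" "(\<integral>x. \<phi> x \<partial>\<rho>) \<le> L + 1 / real n"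
    using int_\<psi> by (simp_all add: prob_space)
qed

lemma integral_diff_le_tv_dist:
  fixes \<phi> :: "'a \<Rightarrow> real"
  assumes \<rho>: "prob_space \<rho>" and \<rho>': "prob_space \<rho>'" and sets_eq: "sets \<rho>' = sets \<rho>"
    and \<phi>_meas: "\<phi> \<in> borel_measurable \<rho>" and \<phi>: "\<And>x. x \<in> space \<rho> \<Longrightarrow> 0 \<le> \<phi> x \<and> \<phi> x \<le> 1"
  shows "(\<integral>x. \<phi> x \<partial>\<rho>) - (\<integral>x. \<phi> x \<partial>\<rho>') \<le> tv_dist \<rho> \<rho>'"
proof (rule field_le_epsilon)
  fix e :: real assume "e > 0"
  then obtain n where n: "n > 0" "inverse (real n) < e"
    using ex_inverse_of_nat_less by blast
  have space_eq: "space \<rho>' = space \<rho>"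
    using sets_eq by (rule sets_eq_imp_space_eq)
  define A where "A j = {x \<in> space \<rho>. real j / real n \<le> \<phi> x}" for j
  have A: "A j \<in> sets \<rho>" for j
    unfolding A_def using \<phi>_meas by measurable
  have "(\<integral>x. \<phi> x \<partial>\<rho>) \<le> (\<Sum>j=1..n. measure \<rho> (A j)) / real n + 1 / real n"
    using integral_level_set_bounds(2)[OF \<rho> \<phi>_meas \<phi> n(1)] unfolding A_def .
  moreover have "(\<Sum>j=1..n. measure \<rho>' (A j)) / real n \<le> (\<integral>x. \<phi> x \<partial>\<rho>')"
    using integral_level_set_bounds(1)[OF \<rho>' _ _ n(1), of \<phi>] \<phi>_meas \<phi>
    unfolding A_def space_eq measurable_cong_sets[OF sets_eq refl] by blast
  ultimately have "(\<integral>x. \<phi> x \<partial>\<rho>) - (\<integral>x. \<phi> x \<partial>\<rho>')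
      \<le> (\<Sum>j=1..n. measure \<rho> (A j) - measure \<rho>' (A j)) / real n + 1 / real n"
    by (simp add: sum_subtractf diff_divide_distrib)
  also have "\<dots> \<le> (\<Sum>j=1..n. tv_dist \<rho> \<rho>') / real n + 1 / real n"
    using A \<rho> \<rho>' abs_measure_diff_le_tv_dist[THEN abs_le_D1]
    by (intro add_right_mono divide_right_mono sum_mono) auto
  also have "\<dots> \<le> tv_dist \<rho> \<rho>' + e"
    using n by (simp add: inverse_eq_divide)
  finally show "(\<integral>x. \<phi> x \<partial>\<rho>) - (\<integral>x. \<phi> x \<partial>\<rho>') \<le> tv_dist \<rho> \<rho>' + e" .
qed

lemma abs_integral_diff_le_tv_dist:
  fixes \<phi> :: "'a \<Rightarrow> real"
  assumes \<rho>: "prob_space \<rho>" "sets \<rho> = sets N" and \<rho>': "prob_space \<rho>'" "sets \<rho>' = sets N"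
    and \<phi>_meas: "\<phi> \<in> borel_measurable N" and \<phi>: "\<And>x. x \<in> space N \<Longrightarrow> 0 \<le> \<phi> x \<and> \<phi> x \<le> 1"
  shows "\<bar>(\<integral>x. \<phi> x \<partial>\<rho>) - (\<integral>x. \<phi> x \<partial>\<rho>')\<bar> \<le> tv_dist \<rho> \<rho>'"
proof -
  have "(\<integral>x. \<phi> x \<partial>\<rho>) - (\<integral>x. \<phi> x \<partial>\<rho>') \<le> tv_dist \<rho> \<rho>'"
    using \<rho> \<rho>' \<phi>_meas \<phi> sets_eq_imp_space_eq[OF \<rho>(2)]
    by (intro integral_diff_le_tv_dist) (auto cong: measurable_cong_sets)
  moreover have "(\<integral>x. \<phi> x \<partial>\<rho>') - (\<integral>x. \<phi> x \<partial>\<rho>) \<le> tv_dist \<rho>' \<rho>"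
    using \<rho> \<rho>' \<phi>_meas \<phi> sets_eq_imp_space_eq[OF \<rho>'(2)]
    by (intro integral_diff_le_tv_dist) (auto cong: measurable_cong_sets)
  moreover have "tv_dist \<rho>' \<rho> = tv_dist \<rho> \<rho>'"
    using \<rho> \<rho>' by (intro tv_dist_commute) simp
  ultimately show ?thesis
    by linarith
qed

lemma measure_bind_prob_algebra:
  assumes "prob_space \<nu>" "sets \<nu> = sets N" "C \<in> N \<rightarrow>\<^sub>M prob_algebra L" "A \<in> sets L"
  shows "measure (bind \<nu> C) A = (\<integral>x. measure (C x) A \<partial>\<nu>)"
  using assms
  by (intro subprob_space.measure_bind prob_space_imp_subprob_space measurable_prob_algebraD)
     (simp_all cong: measurable_cong_sets)

lemma measure_kernel_bounds:
  assumes "C \<in> N \<rightarrow>\<^sub>M prob_algebra L" "x \<in> space N"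
  shows "0 \<le> measure (C x) A \<and> measure (C x) A \<le> 1"
  using measurable_space[OF assms] by (auto simp: space_prob_algebra intro: prob_space.prob_le_1)

lemma bind_in_space_prob_algebra:
  assumes "\<nu> \<in> space (prob_algebra N)" "C \<in> N \<rightarrow>\<^sub>M prob_algebra L"
  shows "bind \<nu> C \<in> space (prob_algebra L)"
  using prob_space_bind'[OF assms] sets_bind'[OF assms] by (simp add: space_prob_algebra)

lemma tv_dist_bind_le:
  assumes \<rho>: "\<rho> \<in> space (prob_algebra N)" and \<rho>': "\<rho>' \<in> space (prob_algebra N)"
    and C: "C \<in> N \<rightarrow>\<^sub>M prob_algebra L"
  shows "tv_dist (bind \<rho> C) (bind \<rho>' C) \<le> tv_dist \<rho> \<rho>'"
proof (rule tv_dist_leI)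
  fix A assume "A \<in> sets (bind \<rho> C)"
  then have A: "A \<in> sets L"
    using sets_bind'[OF \<rho> C] by simp
  have \<rho>_prob: "prob_space \<rho>" "sets \<rho> = sets N" and \<rho>'_prob: "prob_space \<rho>'" "sets \<rho>' = sets N"
    using \<rho> \<rho>' by (auto simp: space_prob_algebra)
  have "\<bar>(\<integral>x. measure (C x) A \<partial>\<rho>) - (\<integral>x. measure (C x) A \<partial>\<rho>')\<bar> \<le> tv_dist \<rho> \<rho>'"
    using measure_kernel_bounds[OF C]
    by (intro abs_integral_diff_le_tv_dist[OF \<rho>_prob \<rho>'_prob]
        measurable_compose[OF C measurable_measure_prob_algebra[OF A]])
  then show "\<bar>measure (bind \<rho> C) A - measure (bind \<rho>' C) A\<bar> \<le> tv_dist \<rho> \<rho>'"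
    by (simp add: measure_bind_prob_algebra[OF \<rho>_prob C A] measure_bind_prob_algebra[OF \<rho>'_prob C A])
qed

section \<open>Domination and composition of kernels\<close>

lemma one_le_if_measure_le_mult:
  assumes \<nu>: "prob_space \<nu>" and \<pi>: "prob_space \<pi>" and sets_eq: "sets \<nu> = sets \<pi>"
    and dom: "\<And>A. A \<in> sets \<pi> \<Longrightarrow> measure \<nu> A \<le> M * measure \<pi> A"
  shows "1 \<le> M"
  using dom[OF sets.top] prob_space.prob_space[OF \<nu>] prob_space.prob_space[OF \<pi>]
    sets_eq_imp_space_eq[OF sets_eq]
  by simp

lemma integrable_bounded_prob_space:
  fixes f :: "'a \<Rightarrow> real"
  assumes "prob_space M" "sets M = sets N" "f \<in> borel_measurable N" "\<And>x. x \<in> space N \<Longrightarrow> \<bar>f x\<bar> \<le> B"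
  shows "integrable M f"
proof -
  interpret prob_space M by fact
  show ?thesis
    using assms sets_eq_imp_space_eq[OF assms(2)]
    by (intro integrable_const_bound[where B=B]) (auto cong: measurable_cong_sets)
qed

lemma integral_le_mult_if_measure_le:
  fixes h :: "'a \<Rightarrow> real"
  assumes \<nu>: "prob_space \<nu>" and \<pi>: "prob_space \<pi>" and sets_eq: "sets \<nu> = sets \<pi>"
    and dom: "\<And>A. A \<in> sets \<pi> \<Longrightarrow> measure \<nu> A \<le> M * measure \<pi> A"
    and h_meas: "h \<in> borel_measurable \<pi>" and h_nonneg: "\<And>x. x \<in> space \<pi> \<Longrightarrow> 0 \<le> h x"
    and h_int: "integrable \<pi> h"
  shows "(\<integral>x. h x \<partial>\<nu>) \<le> M * (\<integral>x. h x \<partial>\<pi>)"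
proof -
  interpret \<nu>: prob_space \<nu> by fact
  interpret \<pi>: prob_space \<pi> by fact
  have space_eq: "space \<nu> = space \<pi>"
    using sets_eq by (rule sets_eq_imp_space_eq)
  have "1 \<le> M"
    using \<nu> \<pi> sets_eq dom by (rule one_le_if_measure_le_mult)
  have "\<nu> \<le> scale_measure (ennreal M) \<pi>"
  proof -
    have "emeasure \<nu> A \<le> emeasure (scale_measure (ennreal M) \<pi>) A" for A
    proof (cases "A \<in> sets \<pi>")
      case True
      then show ?thesis
        using dom[OF True] \<open>1 \<le> M\<close>
        by (simp add: \<nu>.emeasure_eq_measure \<pi>.emeasure_eq_measure ennreal_mult[symmetric] ennreal_leI)
    qed (simp add: sets_eq emeasure_notin_sets)
    then show ?thesis
      using sets_eq space_eq by (simp add: le_measure_iff space_scale_measure le_fun_def)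
  qed
  then have "(\<integral>\<^sup>+x. h x \<partial>\<nu>) \<le> (\<integral>\<^sup>+x. h x \<partial>scale_measure (ennreal M) \<pi>)"
    by (rule nn_integral_mono_measure[rotated]) (simp add: sets_eq)
  also have "\<dots> = ennreal M * (\<integral>\<^sup>+x. h x \<partial>\<pi>)"
    using h_meas by (intro nn_integral_scale_measure) measurable
  also have "\<dots> = ennreal (M * (\<integral>x. h x \<partial>\<pi>))"
    using h_int h_nonneg \<open>1 \<le> M\<close> by (simp add: nn_integral_eq_integral ennreal_mult)
  finally have "(\<integral>\<^sup>+x. h x \<partial>\<nu>) \<le> ennreal (M * (\<integral>x. h x \<partial>\<pi>))" .
  moreover have "(\<integral>x. h x \<partial>\<nu>) = enn2real (\<integral>\<^sup>+x. h x \<partial>\<nu>)"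
    using h_meas h_nonneg sets_eq space_eq
    by (intro integral_eq_nn_integral) (auto cong: measurable_cong_sets)
  ultimately show ?thesis
    using h_int h_nonneg \<open>1 \<le> M\<close> by (simp add: enn2real_leI integral_nonneg_AE)
qed

lemma integral_diff_le_mult_integral_pos_part:
  fixes f g :: "'a \<Rightarrow> real"
  assumes \<nu>: "prob_space \<nu>" "sets \<nu> = sets N" and \<pi>: "prob_space \<pi>" "sets \<pi> = sets N"
    and dom: "\<And>A. A \<in> sets N \<Longrightarrow> measure \<nu> A \<le> M * measure \<pi> A"
    and f: "f \<in> borel_measurable N" "\<And>x. x \<in> space N \<Longrightarrow> \<bar>f x\<bar> \<le> B"
    and g: "g \<in> borel_measurable N" "\<And>x. x \<in> space N \<Longrightarrow> \<bar>g x\<bar> \<le> B"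
  shows "(\<integral>x. f x \<partial>\<nu>) - (\<integral>x. g x \<partial>\<nu>) \<le> M * (\<integral>x. max 0 (f x - g x) \<partial>\<pi>)"
proof -
  have h: "(\<lambda>x. max 0 (f x - g x)) \<in> borel_measurable N"
    using f(1) g(1) by measurable
  have h_bound: "\<bar>max 0 (f x - g x)\<bar> \<le> 2 * B" "\<bar>f x - g x\<bar> \<le> 2 * B" if "x \<in> space N" for x
    using f(2)[OF that] g(2)[OF that] by (auto simp: abs_le_iff)
  have "(\<integral>x. f x \<partial>\<nu>) - (\<integral>x. g x \<partial>\<nu>) = (\<integral>x. f x - g x \<partial>\<nu>)"
    using \<nu> f g by (intro Bochner_Integration.integral_diff[symmetric] integrable_bounded_prob_space)
  also have "\<dots> \<le> (\<integral>x. max 0 (f x - g x) \<partial>\<nu>)"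
    using \<nu> f g h h_bound sets_eq_imp_space_eq[OF \<nu>(2)]
    by (intro integral_mono integrable_bounded_prob_space[where B="2 * B"]) auto
  also have "\<dots> \<le> M * (\<integral>x. max 0 (f x - g x) \<partial>\<pi>)"
    using \<nu> \<pi> dom h h_bound sets_eq_imp_space_eq[OF \<pi>(2)]
    by (intro integral_le_mult_if_measure_le integrable_bounded_prob_space[where B="2 * B"])
       (auto cong: measurable_cong_sets)
  finally show ?thesis .
qed

lemma measure_bind_le_if_stationary:
  assumes \<nu>: "prob_space \<nu>" "sets \<nu> = sets N" and \<pi>: "prob_space \<pi>" "sets \<pi> = sets N"
    and dom: "\<And>A. A \<in> sets N \<Longrightarrow> measure \<nu> A \<le> M * measure \<pi> A"
    and C: "C \<in> N \<rightarrow>\<^sub>M prob_algebra N"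
    and stationary: "\<And>A. A \<in> sets N \<Longrightarrow> (\<integral>x. measure (C x) A \<partial>\<pi>) = measure \<pi> A"
    and A: "A \<in> sets N"
  shows "measure (bind \<nu> C) A \<le> M * measure \<pi> A"
proof -
  have C_meas: "(\<lambda>x. measure (C x) A) \<in> borel_measurable N"
    by (rule measurable_compose[OF C measurable_measure_prob_algebra[OF A]])
  have "measure (bind \<nu> C) A = (\<integral>x. measure (C x) A \<partial>\<nu>)"
    using \<nu> C A by (rule measure_bind_prob_algebra)
  also have "\<dots> \<le> M * (\<integral>x. measure (C x) A \<partial>\<pi>)"
    using \<nu> \<pi> dom C_meas measure_kernel_bounds[OF C] sets_eq_imp_space_eq[OF \<pi>(2)]
    by (intro integral_le_mult_if_measure_le integrable_bounded_prob_space[where B=1])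
       (auto cong: measurable_cong_sets)
  also have "\<dots> = M * measure \<pi> A"
    by (simp add: stationary[OF A])
  finally show ?thesis .
qed

lemma measurable_fold_bind:
  assumes "\<And>j. j \<in> set js \<Longrightarrow> C j \<in> N \<rightarrow>\<^sub>M prob_algebra N"
  shows "fold (\<lambda>j \<nu>. bind \<nu> (C j)) js \<in> prob_algebra N \<rightarrow>\<^sub>M prob_algebra N"
  using assms
proof (induction js)
  case (Cons j js)
  have "(\<lambda>\<nu>. bind \<nu> (C j)) \<in> prob_algebra N \<rightarrow>\<^sub>M prob_algebra N"
    using Cons.prems by (intro measurable_bind_prob_space measurable_ident_sets) auto
  with Cons show ?case
    by (simp add: measurable_comp)
qed (simp add: measurable_ident)

lemma bind_fold_bind:
  assumes \<mu>: "sets \<mu> = sets L" and D: "D \<in> L \<rightarrow>\<^sub>M prob_algebra N"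
    and C: "\<And>j. j \<in> set js \<Longrightarrow> C j \<in> N \<rightarrow>\<^sub>M prob_algebra N"
  shows "bind \<mu> (\<lambda>x. fold (\<lambda>j \<nu>. bind \<nu> (C j)) js (D x)) = fold (\<lambda>j \<nu>. bind \<nu> (C j)) js (bind \<mu> D)"
  using D C
proof (induction js arbitrary: D)
  case (Cons j js)
  have "bind \<mu> (\<lambda>x. bind (D x) (C j)) = bind (bind \<mu> D) (C j)"
    using Cons.prems \<mu>
    by (intro bind_assoc[symmetric] measurable_prob_algebraD) (auto cong: measurable_cong_sets)
  moreover have "(\<lambda>x. bind (D x) (C j)) \<in> L \<rightarrow>\<^sub>M prob_algebra N"
    using Cons.prems by (intro measurable_bind_prob_space) auto
  ultimately show ?case
    using Cons by simp
qed simp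

lemma tv_dist_fold_bind_le:
  assumes C1: "\<And>j. j < n \<Longrightarrow> C1 j \<in> N \<rightarrow>\<^sub>M prob_algebra N"
    and C2: "\<And>j. j < n \<Longrightarrow> C2 j \<in> N \<rightarrow>\<^sub>M prob_algebra N"
    and \<N>: "\<N> \<subseteq> space (prob_algebra N)" "\<mu> \<in> \<N>"
    and closed: "\<And>j \<nu>. j < n \<Longrightarrow> \<nu> \<in> \<N> \<Longrightarrow> bind \<nu> (C2 j) \<in> \<N>"
    and step: "\<And>j \<nu>. j < n \<Longrightarrow> \<nu> \<in> \<N> \<Longrightarrow> tv_dist (bind \<nu> (C1 j)) (bind \<nu> (C2 j)) \<le> \<epsilon>"
  shows "tv_dist (fold (\<lambda>j \<nu>. bind \<nu> (C1 j)) [0..<n] \<mu>) (fold (\<lambda>j \<nu>. bind \<nu> (C2 j)) [0..<n] \<mu>)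
    \<le> real n * \<epsilon>"
proof -
  define \<mu>1 where "\<mu>1 m = fold (\<lambda>j \<nu>. bind \<nu> (C1 j)) [0..<m] \<mu>" for m
  define \<mu>2 where "\<mu>2 m = fold (\<lambda>j \<nu>. bind \<nu> (C2 j)) [0..<m] \<mu>" for m
  have \<mu>1_Suc: "\<mu>1 (Suc m) = bind (\<mu>1 m) (C1 m)" and \<mu>2_Suc: "\<mu>2 (Suc m) = bind (\<mu>2 m) (C2 m)" for m
    by (simp_all add: \<mu>1_def \<mu>2_def)
  have \<mu>2_in: "\<mu>2 m \<in> \<N>" if "m \<le> n" for m
    using that by (induction m) (auto simp: \<mu>2_Suc \<mu>2_def \<N>(2) closed)
  have \<mu>1_in: "\<mu>1 m \<in> space (prob_algebra N)" if "m \<le> n" for m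
    unfolding \<mu>1_def using that \<N>
    by (intro measurable_space[OF measurable_fold_bind] C1) auto
  have "tv_dist (\<mu>1 m) (\<mu>2 m) \<le> real m * \<epsilon>" if "m \<le> n" for m
    using that
  proof (induction m)
    case (Suc m)
    let ?\<nu> = "bind (\<mu>2 m) (C1 m)"
    have m: "m < n"
      using Suc.prems by simp
    have in_space: "\<mu>1 m \<in> space (prob_algebra N)" "\<mu>2 m \<in> space (prob_algebra N)"
      using m \<mu>1_in \<mu>2_in \<N>(1) by auto
    have binds_in_space: "bind (\<mu>1 m) (C1 m) \<in> space (prob_algebra N)" "?\<nu> \<in> space (prob_algebra N)"
      "bind (\<mu>2 m) (C2 m) \<in> space (prob_algebra N)"
      using in_space by (auto intro: bind_in_space_prob_algebra C1[OF m] C2[OF m])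
    have "tv_dist (\<mu>1 (Suc m)) (\<mu>2 (Suc m))
        \<le> tv_dist (bind (\<mu>1 m) (C1 m)) ?\<nu> + tv_dist ?\<nu> (bind (\<mu>2 m) (C2 m))"
      unfolding \<mu>1_Suc \<mu>2_Suc using binds_in_space
      by (intro tv_dist_triangle) (auto simp: space_prob_algebra)
    also have "\<dots> \<le> tv_dist (\<mu>1 m) (\<mu>2 m) + \<epsilon>"
      using tv_dist_bind_le[OF in_space C1[OF m]] step[OF m \<mu>2_in[of m]] m by simp
    also have "\<dots> \<le> real (Suc m) * \<epsilon>"
      using Suc by (simp add: algebra_simps)
    finally show ?case .
  qed (simp add: \<mu>1_def \<mu>2_def)
  then show ?thesis
    unfolding \<mu>1_def \<mu>2_def by simp
qed

section \<open>Gibbs updates and conditional distributions\<close>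

lemma measure_eqI_pair_rectangles:
  assumes "sets \<rho> = sets (A \<Otimes>\<^sub>M B)" "sets \<rho>' = sets (A \<Otimes>\<^sub>M B)"
    and "emeasure \<rho> (space A \<times> space B) \<noteq> \<infinity>"
    and "\<And>a b. a \<in> sets A \<Longrightarrow> b \<in> sets B \<Longrightarrow> emeasure \<rho> (a \<times> b) = emeasure \<rho>' (a \<times> b)"
  shows "\<rho> = \<rho>'"
proof (rule measure_eqI_generator_eq[OF Int_stable_pair_measure_generator,
      where \<Omega>="space A \<times> space B" and A="\<lambda>_. space A \<times> space B"])
  show "{a \<times> b |a b. a \<in> sets A \<and> b \<in> sets B} \<subseteq> Pow (space A \<times> space B)"
    by (auto dest: sets.sets_into_space)
qed (use assms in \<open>auto simp: sets_pair_measure\<close>)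

lemma measurable_distr_Pair:
  assumes "Q \<in> Y \<rightarrow>\<^sub>M prob_algebra Z"
  shows "(\<lambda>z. distr (Q z) (Y \<Otimes>\<^sub>M Z) (Pair z)) \<in> Y \<rightarrow>\<^sub>M prob_algebra (Y \<Otimes>\<^sub>M Z)"
  by (rule measurable_distr_prob_space2[OF assms]) simp

lemma emeasure_distr_Pair:
  assumes z: "z \<in> space Y" and sets_Q: "sets Q = sets Z" and A: "A \<in> sets (Y \<Otimes>\<^sub>M Z)"
  shows "emeasure (distr Q (Y \<Otimes>\<^sub>M Z) (Pair z)) A = emeasure Q {y \<in> space Z. (z, y) \<in> A}"
proof -
  have "Pair z \<in> Q \<rightarrow>\<^sub>M Y \<Otimes>\<^sub>M Z"
    using measurable_Pair1'[OF z] sets_Q by (simp cong: measurable_cong_sets)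
  then show ?thesis
    using A sets_eq_imp_space_eq[OF sets_Q] by (simp add: emeasure_distr vimage_def Int_def conj_commute)
qed

definition gibbs_update :: "nat \<Rightarrow> (nat \<Rightarrow> 'a measure) \<Rightarrow> nat \<Rightarrow> ((nat \<Rightarrow> 'a) \<Rightarrow> 'a measure)
    \<Rightarrow> (nat \<Rightarrow> 'a) \<Rightarrow> (nat \<Rightarrow> 'a) measure" where
  "gibbs_update K Ms i Q z = distr (Q z) (prodX K Ms) (\<lambda>y. z(i := y))"

lemma is_cond_dist_measurable:
  "is_cond_dist K Ms \<pi> i Q \<Longrightarrow> Q \<in> PiM ({..<K} - {i}) Ms \<rightarrow>\<^sub>M prob_algebra (Ms i)"
  by (simp add: is_cond_dist_def)

lemma measurable_fun_upd_lessThan: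
  "i < K \<Longrightarrow> (\<lambda>(z, y). z(i := y)) \<in> PiM ({..<K} - {i}) Ms \<Otimes>\<^sub>M Ms i \<rightarrow>\<^sub>M prodX K Ms"
  using measurable_add_dim[of i "{..<K} - {i}" Ms] by (simp add: insert_absorb)

lemma measurable_restrict_lessThan_Diff:
  assumes "sets \<pi> = sets (prodX K Ms)"
  shows "(\<lambda>x. restrict x ({..<K} - {i})) \<in> \<pi> \<rightarrow>\<^sub>M PiM ({..<K} - {i}) Ms"
  using measurable_restrict_subset[of "{..<K} - {i}" "{..<K}" Ms] assms
  by (simp cong: measurable_cong_sets)

lemma fun_upd_restrict_Diff:
  "x \<in> extensional I \<Longrightarrow> fun_upd (restrict x (I - {i})) i = fun_upd x i"
  by (auto simp: fun_eq_iff extensional_def)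

lemma measurable_gibbs_update:
  assumes "i < K" and "Q \<in> PiM ({..<K} - {i}) Ms \<rightarrow>\<^sub>M prob_algebra (Ms i)"
  shows "gibbs_update K Ms i Q \<in> PiM ({..<K} - {i}) Ms \<rightarrow>\<^sub>M prob_algebra (prodX K Ms)"
  unfolding gibbs_update_def[abs_def]
  by (rule measurable_distr_prob_space2[OF assms(2) measurable_fun_upd_lessThan[OF assms(1)]])

lemma emeasure_gibbs_update:
  assumes i: "i < K" and Q: "Q \<in> PiM ({..<K} - {i}) Ms \<rightarrow>\<^sub>M prob_algebra (Ms i)"
    and z: "z \<in> space (PiM ({..<K} - {i}) Ms)" and E: "E \<in> sets (prodX K Ms)"
  shows "emeasure (gibbs_update K Ms i Q z) E = emeasure (Q z) {y \<in> space (Ms i). z(i := y) \<in> E}"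
proof -
  have sets_Qz: "sets (Q z) = sets (Ms i)"
    using measurable_space[OF Q z] by (simp add: space_prob_algebra)
  have "(\<lambda>y. z(i := y)) \<in> Ms i \<rightarrow>\<^sub>M prodX K Ms"
    using measurable_compose[OF measurable_Pair1'[OF z] measurable_fun_upd_lessThan[OF i]] by simp
  then have "(\<lambda>y. z(i := y)) \<in> Q z \<rightarrow>\<^sub>M prodX K Ms"
    using sets_Qz by (simp cong: measurable_cong_sets)
  then show ?thesis
    using E sets_eq_imp_space_eq[OF sets_Qz]
    by (simp add: gibbs_update_def emeasure_distr vimage_def Int_def conj_commute)
qed

lemma gibbs_step_eq_gibbs_update:
  assumes "x \<in> space (prodX K Ms)"
  shows "gibbs_step K Ms i Q x = gibbs_update K Ms i Q (restrict x ({..<K} - {i}))"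
proof -
  have "x \<in> extensional {..<K}"
    using assms by (simp add: space_PiM PiE_def)
  show ?thesis
    unfolding gibbs_step_def gibbs_update_def fun_upd_restrict_Diff[OF \<open>x \<in> extensional {..<K}\<close>] ..
qed

lemma measurable_gibbs_step:
  assumes "i < K" and "Q \<in> PiM ({..<K} - {i}) Ms \<rightarrow>\<^sub>M prob_algebra (Ms i)"
  shows "gibbs_step K Ms i Q \<in> prodX K Ms \<rightarrow>\<^sub>M prob_algebra (prodX K Ms)"
proof -
  have "(\<lambda>x. gibbs_update K Ms i Q (restrict x ({..<K} - {i}))) \<in> prodX K Ms \<rightarrow>\<^sub>M prob_algebra (prodX K Ms)"
    by (rule measurable_compose[OF measurable_restrict_subset measurable_gibbs_update[OF assms]]) auto
  then show ?thesis
    by (rule measurable_cong[THEN iffD1, rotated]) (simp add: gibbs_step_eq_gibbs_update)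
qed

(* is_cond_dist prescribes the joint law of (x^(-i), x_i) only on rectangles; the pi-lambda
   theorem extends it to the whole product sigma-algebra. *)
lemma is_cond_dist_joint_law:
  assumes \<pi>: "prob_space \<pi>" "sets \<pi> = sets (prodX K Ms)"
    and cond: "is_cond_dist K Ms \<pi> i Q" and i: "i < K"
  defines "Y \<equiv> PiM ({..<K} - {i}) Ms"
  shows "distr \<pi> (Y \<Otimes>\<^sub>M Ms i) (\<lambda>x. (restrict x ({..<K} - {i}), x i))
       = bind \<pi> (\<lambda>x. distr (Q (restrict x ({..<K} - {i}))) (Y \<Otimes>\<^sub>M Ms i) (Pair (restrict x ({..<K} - {i}))))"
    (is "?\<rho> = bind \<pi> ?F")
proof -
  let ?r = "\<lambda>x. restrict x ({..<K} - {i})"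
  interpret \<pi>: prob_space \<pi> by fact
  have r: "?r \<in> \<pi> \<rightarrow>\<^sub>M Y"
    unfolding Y_def using \<pi>(2) by (rule measurable_restrict_lessThan_Diff)
  have coord: "(\<lambda>x. x i) \<in> \<pi> \<rightarrow>\<^sub>M Ms i"
    using measurable_component_singleton[of i "{..<K}" Ms] i \<pi>(2) by (simp cong: measurable_cong_sets)
  have Q: "Q \<in> Y \<rightarrow>\<^sub>M prob_algebra (Ms i)"
    unfolding Y_def using cond by (rule is_cond_dist_measurable)
  have F: "?F \<in> \<pi> \<rightarrow>\<^sub>M prob_algebra (Y \<Otimes>\<^sub>M Ms i)"
    using measurable_compose[OF r measurable_distr_Pair[OF Q]] .
  have \<pi>_in_space: "\<pi> \<in> space (prob_algebra \<pi>)"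
    by (simp add: space_prob_algebra \<pi>.prob_space_axioms)
  show ?thesis
  proof (rule measure_eqI_pair_rectangles)
    show "sets (bind \<pi> ?F) = sets (Y \<Otimes>\<^sub>M Ms i)"
      using sets_bind'[OF \<pi>_in_space F] .
    show "emeasure ?\<rho> (space Y \<times> space (Ms i)) \<noteq> \<infinity>"
      using \<pi>.prob_space_distr[OF measurable_Pair[OF r coord]]
      by (simp add: finite_measure.emeasure_finite prob_space.finite_measure)
  next
    fix a b assume a: "a \<in> sets Y" and b: "b \<in> sets (Ms i)"
    have "emeasure ?\<rho> (a \<times> b) = emeasure \<pi> {x \<in> space \<pi>. ?r x \<in> a \<and> x i \<in> b}"
      using measurable_Pair[OF r coord] a b by (simp add: emeasure_distr vimage_def Int_def conj_commute)
    also have "\<dots> = (\<integral>\<^sup>+x. indicator a (?r x) * emeasure (Q (?r x)) b \<partial>\<pi>)"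
      using cond a b unfolding is_cond_dist_def Y_def by blast
    also have "\<dots> = (\<integral>\<^sup>+x. emeasure (?F x) (a \<times> b) \<partial>\<pi>)"
    proof (rule nn_integral_cong)
      fix x assume "x \<in> space \<pi>"
      then have rx: "?r x \<in> space Y"
        using measurable_space[OF r] by blast
      then have "sets (Q (?r x)) = sets (Ms i)"
        using measurable_space[OF Q] by (simp add: space_prob_algebra)
      then show "indicator a (?r x) * emeasure (Q (?r x)) b = emeasure (?F x) (a \<times> b)"
        using rx a b sets.sets_into_space[OF b]
        by (simp add: emeasure_distr_Pair Int_absorb1 Collect_conj_eq indicator_def)
    qed
    also have "\<dots> = emeasure (bind \<pi> ?F) (a \<times> b)"
      using a b by (intro emeasure_bind_prob_algebra[OF \<pi>_in_space F, symmetric]) simp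
    finally show "emeasure ?\<rho> (a \<times> b) = emeasure (bind \<pi> ?F) (a \<times> b)" .
  qed simp
qed

lemma emeasure_is_cond_dist_pair:
  assumes \<pi>: "prob_space \<pi>" "sets \<pi> = sets (prodX K Ms)"
    and cond: "is_cond_dist K Ms \<pi> i Q" and i: "i < K"
    and G: "G \<in> sets (PiM ({..<K} - {i}) Ms \<Otimes>\<^sub>M Ms i)"
  shows "emeasure \<pi> {x \<in> space \<pi>. (restrict x ({..<K} - {i}), x i) \<in> G}
       = (\<integral>\<^sup>+x. emeasure (Q (restrict x ({..<K} - {i})))
                 {y \<in> space (Ms i). (restrict x ({..<K} - {i}), y) \<in> G} \<partial>\<pi>)"
proof -
  let ?r = "\<lambda>x. restrict x ({..<K} - {i})" and ?P = "PiM ({..<K} - {i}) Ms \<Otimes>\<^sub>M Ms i"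
  let ?F = "\<lambda>x. distr (Q (?r x)) ?P (Pair (?r x))"
  have r: "?r \<in> \<pi> \<rightarrow>\<^sub>M PiM ({..<K} - {i}) Ms"
    using \<pi>(2) by (rule measurable_restrict_lessThan_Diff)
  have coord: "(\<lambda>x. x i) \<in> \<pi> \<rightarrow>\<^sub>M Ms i"
    using measurable_component_singleton[of i "{..<K}" Ms] i \<pi>(2) by (simp cong: measurable_cong_sets)
  have Q: "Q \<in> PiM ({..<K} - {i}) Ms \<rightarrow>\<^sub>M prob_algebra (Ms i)"
    using cond by (rule is_cond_dist_measurable)
  have \<pi>_in_space: "\<pi> \<in> space (prob_algebra \<pi>)"
    using \<pi>(1) by (simp add: space_prob_algebra)
  have "emeasure \<pi> {x \<in> space \<pi>. (?r x, x i) \<in> G} = emeasure (distr \<pi> ?P (\<lambda>x. (?r x, x i))) G"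
    using measurable_Pair[OF r coord] G by (simp add: emeasure_distr vimage_def Int_def conj_commute)
  also have "\<dots> = emeasure (bind \<pi> ?F) G"
    by (simp only: is_cond_dist_joint_law[OF \<pi> cond i])
  also have "\<dots> = (\<integral>\<^sup>+x. emeasure (?F x) G \<partial>\<pi>)"
    using G by (intro emeasure_bind_prob_algebra[OF \<pi>_in_space measurable_compose[OF r measurable_distr_Pair[OF Q]]])
  also have "\<dots> = (\<integral>\<^sup>+x. emeasure (Q (?r x)) {y \<in> space (Ms i). (?r x, y) \<in> G} \<partial>\<pi>)"
    using G measurable_space[OF r] measurable_space[OF Q]
    by (intro nn_integral_cong emeasure_distr_Pair) (auto simp: space_prob_algebra)
  finally show ?thesis .
qed

lemma emeasure_is_cond_dist_gibbs_step:
  assumes \<pi>: "prob_space \<pi>" "sets \<pi> = sets (prodX K Ms)"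
    and cond: "is_cond_dist K Ms \<pi> i Q" and i: "i < K"
    and T: "T \<in> sets (PiM ({..<K} - {i}) Ms)" and E: "E \<in> sets (prodX K Ms)"
  shows "emeasure \<pi> {x \<in> space \<pi>. restrict x ({..<K} - {i}) \<in> T \<and> x \<in> E}
       = (\<integral>\<^sup>+x. indicator T (restrict x ({..<K} - {i})) * emeasure (gibbs_step K Ms i Q x) E \<partial>\<pi>)"
proof -
  let ?r = "\<lambda>x. restrict x ({..<K} - {i})"
  let ?P = "PiM ({..<K} - {i}) Ms \<Otimes>\<^sub>M Ms i"
  define G where "G = {p \<in> space ?P. fst p \<in> T \<and> (fst p)(i := snd p) \<in> E}"
  have "G = ((\<lambda>(z, y). z(i := y)) -` E \<inter> space ?P) \<inter> (fst -` T \<inter> space ?P)"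
    unfolding G_def by auto
  then have G_sets: "G \<in> sets ?P"
    using measurable_sets[OF measurable_fun_upd_lessThan[OF i] E] measurable_sets[OF measurable_fst T]
    by auto
  have space_\<pi>: "space \<pi> = space (prodX K Ms)"
    using \<pi>(2) by (rule sets_eq_imp_space_eq)
  have "(?r x, x i) \<in> G \<longleftrightarrow> ?r x \<in> T \<and> x \<in> E" if x: "x \<in> space \<pi>" for x
  proof -
    have "x \<in> extensional {..<K}" "?r x \<in> space (PiM ({..<K} - {i}) Ms)" "x i \<in> space (Ms i)"
      using x i by (auto simp: space_\<pi> space_PiM PiE_def)
    then show ?thesis
      unfolding G_def using fun_upd_restrict_Diff[of x "{..<K}" i] by (auto simp: space_pair_measure)
  qed
  then have "emeasure \<pi> {x \<in> space \<pi>. ?r x \<in> T \<and> x \<in> E} = emeasure \<pi> {x \<in> space \<pi>. (?r x, x i) \<in> G}"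
    by (metis (lifting))
  also have "\<dots> = (\<integral>\<^sup>+x. emeasure (Q (?r x)) {y \<in> space (Ms i). (?r x, y) \<in> G} \<partial>\<pi>)"
    by (rule emeasure_is_cond_dist_pair[OF \<pi> cond i G_sets])
  also have "\<dots> = (\<integral>\<^sup>+x. indicator T (?r x) * emeasure (gibbs_step K Ms i Q x) E \<partial>\<pi>)"
  proof (rule nn_integral_cong)
    fix x assume "x \<in> space \<pi>"
    then have x: "x \<in> space (prodX K Ms)" and rx: "?r x \<in> space (PiM ({..<K} - {i}) Ms)"
      using measurable_space[OF measurable_restrict_lessThan_Diff[OF \<pi>(2)]] by (auto simp: space_\<pi>)
    have "{y \<in> space (Ms i). (?r x, y) \<in> G}
        = (if ?r x \<in> T then {y \<in> space (Ms i). (?r x)(i := y) \<in> E} else {})"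
      using rx by (auto simp: G_def space_pair_measure)
    then show "emeasure (Q (?r x)) {y \<in> space (Ms i). (?r x, y) \<in> G}
        = indicator T (?r x) * emeasure (gibbs_step K Ms i Q x) E"
      using emeasure_gibbs_update[OF i is_cond_dist_measurable[OF cond] rx E]
      by (simp add: gibbs_step_eq_gibbs_update[OF x])
  qed
  finally show ?thesis .
qed

lemma integral_is_cond_dist_gibbs_step:
  assumes \<pi>: "prob_space \<pi>" "sets \<pi> = sets (prodX K Ms)"
    and cond: "is_cond_dist K Ms \<pi> i Q" and i: "i < K"
    and T: "T \<in> sets (PiM ({..<K} - {i}) Ms)" and E: "E \<in> sets (prodX K Ms)"
  shows "(\<integral>x. indicator T (restrict x ({..<K} - {i})) * measure (gibbs_step K Ms i Q x) E \<partial>\<pi>)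
       = measure \<pi> {x \<in> space \<pi>. restrict x ({..<K} - {i}) \<in> T \<and> x \<in> E}"
proof -
  let ?r = "\<lambda>x. restrict x ({..<K} - {i})"
  let ?f = "\<lambda>x. indicator T (?r x) * measure (gibbs_step K Ms i Q x) E"
  have step: "gibbs_step K Ms i Q \<in> \<pi> \<rightarrow>\<^sub>M prob_algebra (prodX K Ms)"
    using measurable_gibbs_step[OF i is_cond_dist_measurable[OF cond]] \<pi>(2)
    by (simp cong: measurable_cong_sets)
  have f_meas: "?f \<in> borel_measurable \<pi>"
    by (intro borel_measurable_times measurable_compose[OF measurable_restrict_lessThan_Diff[OF \<pi>(2)]
        borel_measurable_indicator[OF T]] measurable_compose[OF step measurable_measure_prob_algebra[OF E]])
  have "(\<integral>\<^sup>+x. ?f x \<partial>\<pi>) = (\<integral>\<^sup>+x. indicator T (?r x) * emeasure (gibbs_step K Ms i Q x) E \<partial>\<pi>)"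
  proof (rule nn_integral_cong)
    fix x assume "x \<in> space \<pi>"
    then have "prob_space (gibbs_step K Ms i Q x)"
      using measurable_space[OF step] by (simp add: space_prob_algebra)
    then show "ennreal (?f x) = indicator T (?r x) * emeasure (gibbs_step K Ms i Q x) E"
      by (simp add: prob_space.finite_measure finite_measure.emeasure_eq_measure indicator_def)
  qed
  also have "\<dots> = emeasure \<pi> {x \<in> space \<pi>. ?r x \<in> T \<and> x \<in> E}"
    by (rule emeasure_is_cond_dist_gibbs_step[OF \<pi> cond i T E, symmetric])
  finally have nn_integral_f: "(\<integral>\<^sup>+x. ?f x \<partial>\<pi>) = emeasure \<pi> {x \<in> space \<pi>. ?r x \<in> T \<and> x \<in> E}" .
  have "(\<integral>x. ?f x \<partial>\<pi>) = enn2real (\<integral>\<^sup>+x. ?f x \<partial>\<pi>)"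
    by (rule integral_eq_nn_integral[OF f_meas]) simp
  also have "\<dots> = measure \<pi> {x \<in> space \<pi>. ?r x \<in> T \<and> x \<in> E}"
    unfolding nn_integral_f by (rule measure_def[symmetric])
  finally show ?thesis .
qed

lemma integral_measure_gibbs_step_stationary:
  assumes \<pi>: "prob_space \<pi>" "sets \<pi> = sets (prodX K Ms)"
    and cond: "is_cond_dist K Ms \<pi> i Q" and i: "i < K" and A: "A \<in> sets (prodX K Ms)"
  shows "(\<integral>x. measure (gibbs_step K Ms i Q x) A \<partial>\<pi>) = measure \<pi> A"
proof -
  let ?Y = "PiM ({..<K} - {i}) Ms"
  have space_\<pi>: "space \<pi> = space (prodX K Ms)"
    using \<pi>(2) by (rule sets_eq_imp_space_eq)
  have r: "restrict x ({..<K} - {i}) \<in> space ?Y" if "x \<in> space \<pi>" for x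
    using measurable_space[OF measurable_restrict_lessThan_Diff[OF \<pi>(2)] that] .
  have "(\<integral>x. measure (gibbs_step K Ms i Q x) A \<partial>\<pi>)
      = (\<integral>x. indicator (space ?Y) (restrict x ({..<K} - {i})) * measure (gibbs_step K Ms i Q x) A \<partial>\<pi>)"
    using r by (intro Bochner_Integration.integral_cong) auto
  also have "\<dots> = measure \<pi> {x \<in> space \<pi>. restrict x ({..<K} - {i}) \<in> space ?Y \<and> x \<in> A}"
    by (rule integral_is_cond_dist_gibbs_step[OF \<pi> cond i sets.top A])
  also have "{x \<in> space \<pi>. restrict x ({..<K} - {i}) \<in> space ?Y \<and> x \<in> A} = A"
    using r sets.sets_into_space[OF A] space_\<pi> by auto
  finally show ?thesis .
qed

lemma Nset_subset_space_prob_algebra: "Nset K Ms \<pi> M \<subseteq> space (prob_algebra (prodX K Ms))"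
  by (auto simp: Nset_def space_prob_algebra)

lemma bind_gibbs_step_in_Nset:
  assumes \<pi>: "prob_space \<pi>" "sets \<pi> = sets (prodX K Ms)"
    and cond: "is_cond_dist K Ms \<pi> i Q" and i: "i < K" and \<nu>: "\<nu> \<in> Nset K Ms \<pi> M"
  shows "bind \<nu> (gibbs_step K Ms i Q) \<in> Nset K Ms \<pi> M"
proof -
  have step: "gibbs_step K Ms i Q \<in> prodX K Ms \<rightarrow>\<^sub>M prob_algebra (prodX K Ms)"
    using i cond by (intro measurable_gibbs_step is_cond_dist_measurable)
  have "bind \<nu> (gibbs_step K Ms i Q) \<in> space (prob_algebra (prodX K Ms))"
    using Nset_subset_space_prob_algebra \<nu> step by (blast intro: bind_in_space_prob_algebra)
  moreover have "measure (bind \<nu> (gibbs_step K Ms i Q)) A \<le> M * measure \<pi> A"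
    if "A \<in> sets (prodX K Ms)" for A
    using \<nu> unfolding Nset_def
    by (auto intro!: measure_bind_le_if_stationary[OF _ _ \<pi> _ step _ that]
        integral_measure_gibbs_step_stationary[OF \<pi> cond i])
  ultimately show ?thesis
    by (simp add: Nset_def space_prob_algebra)
qed

section \<open>One Gibbs update under two targets\<close>

lemma abs_integral_gibbs_step_diff_le_tv_dist:
  assumes \<pi>1: "prob_space \<pi>1" "sets \<pi>1 = sets (prodX K Ms)"
    and \<pi>2: "prob_space \<pi>2" "sets \<pi>2 = sets (prodX K Ms)"
    and cond1: "is_cond_dist K Ms \<pi>1 i Q1" and cond2: "is_cond_dist K Ms \<pi>2 i Q2" and i: "i < K"
    and T: "T \<in> sets (PiM ({..<K} - {i}) Ms)" and E: "E \<in> sets (prodX K Ms)"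
  shows "\<bar>(\<integral>x. indicator T (restrict x ({..<K} - {i})) * measure (gibbs_step K Ms i Q1 x) E \<partial>\<pi>2)
          - (\<integral>x. indicator T (restrict x ({..<K} - {i})) * measure (gibbs_step K Ms i Q2 x) E \<partial>\<pi>2)\<bar>
         \<le> 2 * tv_dist \<pi>1 \<pi>2"
proof -
  let ?r = "\<lambda>x. restrict x ({..<K} - {i})"
  let ?\<phi> = "\<lambda>x. indicator T (?r x) * measure (gibbs_step K Ms i Q1 x) E"
  define S where "S = {x \<in> space (prodX K Ms). ?r x \<in> T \<and> x \<in> E}"
  have space1: "space \<pi>1 = space (prodX K Ms)" and space2: "space \<pi>2 = space (prodX K Ms)"
    using sets_eq_imp_space_eq[OF \<pi>1(2)] sets_eq_imp_space_eq[OF \<pi>2(2)] by simp_all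
  have r: "?r \<in> prodX K Ms \<rightarrow>\<^sub>M PiM ({..<K} - {i}) Ms"
    by (rule measurable_restrict_lessThan_Diff) simp
  have step1: "gibbs_step K Ms i Q1 \<in> prodX K Ms \<rightarrow>\<^sub>M prob_algebra (prodX K Ms)"
    by (rule measurable_gibbs_step[OF i is_cond_dist_measurable[OF cond1]])
  have "\<bar>(\<integral>x. ?\<phi> x \<partial>\<pi>1) - (\<integral>x. ?\<phi> x \<partial>\<pi>2)\<bar> \<le> tv_dist \<pi>1 \<pi>2"
    using measure_kernel_bounds[OF step1]
    by (intro abs_integral_diff_le_tv_dist[OF \<pi>1 \<pi>2] borel_measurable_times
        measurable_compose[OF r borel_measurable_indicator[OF T]]
        measurable_compose[OF step1 measurable_measure_prob_algebra[OF E]])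
       (auto simp: indicator_def)
  moreover have "(\<integral>x. ?\<phi> x \<partial>\<pi>1) = measure \<pi>1 S"
    using integral_is_cond_dist_gibbs_step[OF \<pi>1 cond1 i T E] by (simp add: S_def space1)
  moreover have "(\<integral>x. indicator T (?r x) * measure (gibbs_step K Ms i Q2 x) E \<partial>\<pi>2) = measure \<pi>2 S"
    using integral_is_cond_dist_gibbs_step[OF \<pi>2 cond2 i T E] by (simp add: S_def space2)
  moreover have "\<bar>measure \<pi>1 S - measure \<pi>2 S\<bar> \<le> tv_dist \<pi>1 \<pi>2"
  proof (rule abs_measure_diff_le_tv_dist[OF \<pi>1(1) \<pi>2(1)])
    have "S = (?r -` T \<inter> space (prodX K Ms)) \<inter> E"
      unfolding S_def by blast
    also have "\<dots> \<in> sets (prodX K Ms)"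
      by (intro sets.Int measurable_sets[OF r T] E)
    finally show "S \<in> sets \<pi>1"
      using \<pi>1(2) by simp
  qed
  ultimately show ?thesis
    by linarith
qed

(* Both transition probabilities depend on x only through x^(-i), so the positive part of their
   difference lives on a set {x^(-i) in T}. *)
lemma measure_bind_gibbs_step_diff_le:
  assumes i: "i < K"
    and Q1: "Q1 \<in> PiM ({..<K} - {i}) Ms \<rightarrow>\<^sub>M prob_algebra (Ms i)"
    and Q2: "Q2 \<in> PiM ({..<K} - {i}) Ms \<rightarrow>\<^sub>M prob_algebra (Ms i)"
    and \<pi>: "prob_space \<pi>" "sets \<pi> = sets (prodX K Ms)" and \<nu>: "\<nu> \<in> Nset K Ms \<pi> M"
    and E: "E \<in> sets (prodX K Ms)"
    and c: "\<And>T. T \<in> sets (PiM ({..<K} - {i}) Ms) \<Longrightarrow>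
      (\<integral>x. indicator T (restrict x ({..<K} - {i})) * measure (gibbs_step K Ms i Q1 x) E \<partial>\<pi>)
      - (\<integral>x. indicator T (restrict x ({..<K} - {i})) * measure (gibbs_step K Ms i Q2 x) E \<partial>\<pi>) \<le> c"
  shows "measure (bind \<nu> (gibbs_step K Ms i Q1)) E - measure (bind \<nu> (gibbs_step K Ms i Q2)) E \<le> M * c"
proof -
  let ?X = "prodX K Ms" and ?Y = "PiM ({..<K} - {i}) Ms" and ?r = "\<lambda>x. restrict x ({..<K} - {i})"
  let ?g1 = "\<lambda>x. measure (gibbs_step K Ms i Q1 x) E" and ?g2 = "\<lambda>x. measure (gibbs_step K Ms i Q2 x) E"
  define T where "T = {z \<in> space ?Y. measure (gibbs_update K Ms i Q2 z) E < measure (gibbs_update K Ms i Q1 z) E}"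
  have \<nu>_prob: "prob_space \<nu>" "sets \<nu> = sets ?X"
    and dom: "\<And>A. A \<in> sets ?X \<Longrightarrow> measure \<nu> A \<le> M * measure \<pi> A"
    using \<nu> by (auto simp: Nset_def)
  have step1: "gibbs_step K Ms i Q1 \<in> ?X \<rightarrow>\<^sub>M prob_algebra ?X"
    and step2: "gibbs_step K Ms i Q2 \<in> ?X \<rightarrow>\<^sub>M prob_algebra ?X"
    using i Q1 Q2 by (auto intro: measurable_gibbs_step)
  have g_meas: "?g1 \<in> borel_measurable ?X" "?g2 \<in> borel_measurable ?X"
    using step1 step2 E by measurable
  have g_bounds: "\<bar>?g1 x\<bar> \<le> 1" "\<bar>?g2 x\<bar> \<le> 1" if "x \<in> space ?X" for x
    using measure_kernel_bounds[OF step1 that] measure_kernel_bounds[OF step2 that] by auto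
  have r: "?r \<in> ?X \<rightarrow>\<^sub>M ?Y"
    by (rule measurable_restrict_lessThan_Diff) simp
  have T: "T \<in> sets ?Y"
    unfolding T_def using measurable_gibbs_update[OF i Q1] measurable_gibbs_update[OF i Q2] E
    by measurable
  have ind_meas: "(\<lambda>x. indicator T (?r x) * ?g1 x) \<in> borel_measurable ?X"
    "(\<lambda>x. indicator T (?r x) * ?g2 x) \<in> borel_measurable ?X"
    using g_meas by (auto intro!: borel_measurable_times measurable_compose[OF r borel_measurable_indicator[OF T]])
  have pos_part: "max 0 (?g1 x - ?g2 x) = indicator T (?r x) * ?g1 x - indicator T (?r x) * ?g2 x"
    if "x \<in> space ?X" for x
    using gibbs_step_eq_gibbs_update[OF that] measurable_space[OF r that]
    by (auto simp: T_def indicator_def)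
  have M: "1 \<le> M"
    by (rule one_le_if_measure_le_mult[OF \<nu>_prob(1) \<pi>(1)]) (use \<nu>_prob \<pi> dom in auto)
  have "measure (bind \<nu> (gibbs_step K Ms i Q1)) E - measure (bind \<nu> (gibbs_step K Ms i Q2)) E
      = (\<integral>x. ?g1 x \<partial>\<nu>) - (\<integral>x. ?g2 x \<partial>\<nu>)"
    using \<nu>_prob step1 step2 E by (simp add: measure_bind_prob_algebra)
  also have "\<dots> \<le> M * (\<integral>x. max 0 (?g1 x - ?g2 x) \<partial>\<pi>)"
    by (rule integral_diff_le_mult_integral_pos_part[OF \<nu>_prob \<pi> dom g_meas(1) g_bounds(1) g_meas(2) g_bounds(2)])
  also have "(\<integral>x. max 0 (?g1 x - ?g2 x) \<partial>\<pi>)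
      = (\<integral>x. indicator T (?r x) * ?g1 x - indicator T (?r x) * ?g2 x \<partial>\<pi>)"
    using pos_part sets_eq_imp_space_eq[OF \<pi>(2)] by (intro Bochner_Integration.integral_cong) auto
  also have "\<dots> = (\<integral>x. indicator T (?r x) * ?g1 x \<partial>\<pi>) - (\<integral>x. indicator T (?r x) * ?g2 x \<partial>\<pi>)"
    using g_bounds
    by (intro Bochner_Integration.integral_diff integrable_bounded_prob_space[OF \<pi> ind_meas(1), where B=1]
        integrable_bounded_prob_space[OF \<pi> ind_meas(2), where B=1]) (auto simp: indicator_def)
  also have "M * \<dots> \<le> M * c"
    using M c[OF T] by simp
  finally show ?thesis .
qed

lemma tv_dist_bind_gibbs_step_le:
  assumes \<pi>1: "prob_space \<pi>1" "sets \<pi>1 = sets (prodX K Ms)"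
    and \<pi>2: "prob_space \<pi>2" "sets \<pi>2 = sets (prodX K Ms)"
    and cond1: "is_cond_dist K Ms \<pi>1 i Q1" and cond2: "is_cond_dist K Ms \<pi>2 i Q2" and i: "i < K"
    and \<nu>: "\<nu> \<in> Nset K Ms \<pi>2 M"
  shows "tv_dist (bind \<nu> (gibbs_step K Ms i Q1)) (bind \<nu> (gibbs_step K Ms i Q2)) \<le> 2 * M * tv_dist \<pi>1 \<pi>2"
proof (rule tv_dist_leI)
  fix E assume "E \<in> sets (bind \<nu> (gibbs_step K Ms i Q1))"
  then have E: "E \<in> sets (prodX K Ms)"
    using \<nu> sets_bind'[OF _ measurable_gibbs_step[OF i is_cond_dist_measurable[OF cond1]]]
    by (simp add: Nset_def space_prob_algebra)
  have Q1: "Q1 \<in> PiM ({..<K} - {i}) Ms \<rightarrow>\<^sub>M prob_algebra (Ms i)"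
    and Q2: "Q2 \<in> PiM ({..<K} - {i}) Ms \<rightarrow>\<^sub>M prob_algebra (Ms i)"
    using cond1 cond2 by (auto intro: is_cond_dist_measurable)
  note bound = abs_integral_gibbs_step_diff_le_tv_dist[OF \<pi>1 \<pi>2 cond1 cond2 i _ E]
  have "measure (bind \<nu> (gibbs_step K Ms i Q1)) E - measure (bind \<nu> (gibbs_step K Ms i Q2)) E
      \<le> M * (2 * tv_dist \<pi>1 \<pi>2)"
    by (rule measure_bind_gibbs_step_diff_le[OF i Q1 Q2 \<pi>2 \<nu> E]) (rule abs_le_D1[OF bound])
  moreover have "measure (bind \<nu> (gibbs_step K Ms i Q2)) E - measure (bind \<nu> (gibbs_step K Ms i Q1)) E
      \<le> M * (2 * tv_dist \<pi>1 \<pi>2)"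
    by (rule measure_bind_gibbs_step_diff_le[OF i Q2 Q1 \<pi>2 \<nu> E]) (use abs_le_D2[OF bound] in simp)
  ultimately show "\<bar>measure (bind \<nu> (gibbs_step K Ms i Q1)) E - measure (bind \<nu> (gibbs_step K Ms i Q2)) E\<bar>
      \<le> 2 * M * tv_dist \<pi>1 \<pi>2"
    by (simp add: abs_le_iff)
qed

section \<open>The full scan\<close>

lemma apply_gibbs_kernel_eq_fold:
  assumes \<mu>: "sets \<mu> = sets (prodX K Ms)"
    and Q: "\<And>i. i < K \<Longrightarrow> Q i \<in> PiM ({..<K} - {i}) Ms \<rightarrow>\<^sub>M prob_algebra (Ms i)"
  shows "apply_kernel \<mu> (gibbs_kernel K Ms Q) = fold (\<lambda>j \<nu>. bind \<nu> (gibbs_step K Ms j (Q j))) [0..<K] \<mu>"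
proof -
  have gibbs_iter_eq_fold: "gibbs_iter K Ms Q n \<nu> = fold (\<lambda>j \<nu>. bind \<nu> (gibbs_step K Ms j (Q j))) [0..<n] \<nu>"
    for n \<nu> by (induction n) simp_all
  have "apply_kernel \<mu> (gibbs_kernel K Ms Q)
      = fold (\<lambda>j \<nu>. bind \<nu> (gibbs_step K Ms j (Q j))) [0..<K] (bind \<mu> (return (prodX K Ms)))"
    unfolding apply_kernel_def gibbs_kernel_def[abs_def] gibbs_iter_eq_fold
    using Q by (intro bind_fold_bind[OF \<mu> measurable_return_prob_space] measurable_gibbs_step) auto
  then show ?thesis
    by (simp add: bind_return''[OF \<mu>])
qed

lemma apply_gibbs_kernel_in_space_prob_algebra:
  assumes \<mu>: "\<mu> \<in> space (prob_algebra (prodX K Ms))"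
    and Q: "\<And>i. i < K \<Longrightarrow> Q i \<in> PiM ({..<K} - {i}) Ms \<rightarrow>\<^sub>M prob_algebra (Ms i)"
  shows "apply_kernel \<mu> (gibbs_kernel K Ms Q) \<in> space (prob_algebra (prodX K Ms))"
proof -
  have "fold (\<lambda>j \<nu>. bind \<nu> (gibbs_step K Ms j (Q j))) [0..<K] \<mu> \<in> space (prob_algebra (prodX K Ms))"
    by (rule measurable_space[OF measurable_fold_bind \<mu>]) (use Q in \<open>auto intro: measurable_gibbs_step\<close>)
  moreover have "sets \<mu> = sets (prodX K Ms)"
    using \<mu> by (simp add: space_prob_algebra)
  ultimately show ?thesis
    using Q by (simp add: apply_gibbs_kernel_eq_fold)
qed

lemma tv_dist_apply_gibbs_kernel_le:
  assumes \<pi>1: "prob_space \<pi>1" "sets \<pi>1 = sets (prodX K Ms)"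
    and \<pi>2: "prob_space \<pi>2" "sets \<pi>2 = sets (prodX K Ms)"
    and cond1: "\<forall>i<K. is_cond_dist K Ms \<pi>1 i (Q1 i)" and cond2: "\<forall>i<K. is_cond_dist K Ms \<pi>2 i (Q2 i)"
    and \<mu>: "\<mu> \<in> Nset K Ms \<pi>2 M"
  shows "tv_dist (apply_kernel \<mu> (gibbs_kernel K Ms Q1)) (apply_kernel \<mu> (gibbs_kernel K Ms Q2))
           \<le> 2 * M * real K * tv_dist \<pi>1 \<pi>2"
proof -
  have \<mu>_sets: "sets \<mu> = sets (prodX K Ms)"
    using \<mu> by (simp add: Nset_def)
  have Q1: "\<And>j. j < K \<Longrightarrow> Q1 j \<in> PiM ({..<K} - {j}) Ms \<rightarrow>\<^sub>M prob_algebra (Ms j)"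
    and Q2: "\<And>j. j < K \<Longrightarrow> Q2 j \<in> PiM ({..<K} - {j}) Ms \<rightarrow>\<^sub>M prob_algebra (Ms j)"
    using cond1 cond2 by (auto intro: is_cond_dist_measurable)
  have "tv_dist (fold (\<lambda>j \<nu>. bind \<nu> (gibbs_step K Ms j (Q1 j))) [0..<K] \<mu>)
                (fold (\<lambda>j \<nu>. bind \<nu> (gibbs_step K Ms j (Q2 j))) [0..<K] \<mu>)
        \<le> real K * (2 * M * tv_dist \<pi>1 \<pi>2)"
  proof (rule tv_dist_fold_bind_le[OF measurable_gibbs_step[OF _ Q1] measurable_gibbs_step[OF _ Q2]
        Nset_subset_space_prob_algebra \<mu>])
    fix j \<nu> assume j: "j < K" and \<nu>: "\<nu> \<in> Nset K Ms \<pi>2 M"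
    show "bind \<nu> (gibbs_step K Ms j (Q2 j)) \<in> Nset K Ms \<pi>2 M"
      using cond2 j \<nu> by (intro bind_gibbs_step_in_Nset[OF \<pi>2]) auto
    show "tv_dist (bind \<nu> (gibbs_step K Ms j (Q1 j))) (bind \<nu> (gibbs_step K Ms j (Q2 j)))
        \<le> 2 * M * tv_dist \<pi>1 \<pi>2"
      using cond1 cond2 j \<nu> by (intro tv_dist_bind_gibbs_step_le[OF \<pi>1 \<pi>2]) auto
  qed
  then show ?thesis
    using Q1 Q2 by (simp add: apply_gibbs_kernel_eq_fold[OF \<mu>_sets] mult_ac)
qed

theorem proposition2p2:
  fixes K :: nat and Ms :: "nat \<Rightarrow> 'a measure"
    and \<pi>1 \<pi>2 \<mu> :: "(nat \<Rightarrow> 'a) measure"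
    and Q1 Q2 :: "nat \<Rightarrow> (nat \<Rightarrow> 'a) \<Rightarrow> 'a measure"
    and M :: real
  assumes "prob_space \<pi>1" and "sets \<pi>1 = sets (prodX K Ms)"
    and "prob_space \<pi>2" and "sets \<pi>2 = sets (prodX K Ms)"
    and "\<forall>i<K. is_cond_dist K Ms \<pi>1 i (Q1 i)"
    and "\<forall>i<K. is_cond_dist K Ms \<pi>2 i (Q2 i)"
    and "M \<ge> 1"
    and "\<mu> \<in> Nset K Ms \<pi>1 M \<union> Nset K Ms \<pi>2 M"
  shows "tv_dist (apply_kernel \<mu> (gibbs_kernel K Ms Q1)) (apply_kernel \<mu> (gibbs_kernel K Ms Q2))
           \<le> 2 * M * real K * tv_dist \<pi>1 \<pi>2"
proof (cases "\<mu> \<in> Nset K Ms \<pi>2 M")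
  case True
  then show ?thesis
    by (rule tv_dist_apply_gibbs_kernel_le[OF assms(1-6)])
next
  case False
  then have \<mu>: "\<mu> \<in> Nset K Ms \<pi>1 M"
    using assms(8) by blast
  have "tv_dist (apply_kernel \<mu> (gibbs_kernel K Ms Q2)) (apply_kernel \<mu> (gibbs_kernel K Ms Q1))
      \<le> 2 * M * real K * tv_dist \<pi>2 \<pi>1"
    by (rule tv_dist_apply_gibbs_kernel_le[OF assms(3,4,1,2,6,5) \<mu>])
  moreover have "apply_kernel \<mu> (gibbs_kernel K Ms Q1) \<in> space (prob_algebra (prodX K Ms))"
    and "apply_kernel \<mu> (gibbs_kernel K Ms Q2) \<in> space (prob_algebra (prodX K Ms))"
    using Nset_subset_space_prob_algebra[THEN subsetD, OF \<mu>] assms(5,6)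
    by (auto intro!: apply_gibbs_kernel_in_space_prob_algebra is_cond_dist_measurable)
  ultimately show ?thesis
    using assms(2,4) by (simp add: tv_dist_commute space_prob_algebra)
qed

end
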